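(* For any integer $d\ge 841$ there exists a polynomial $f\in\mathbb{Z}[x]$ of degree at most $d\log d$ and height $H(f)\le\exp(2d\log d)$ whose minimal-degree binomial multiple $x^m-a$ (with $a\in\mathbb{Q}$) satisfies $m>\exp(\sqrt d)$ and $H(a)>2^{\exp(\sqrt d)}$.
   Context: $\log$ denotes the natural logarithm. A binomial multiple of $f$ is a multiple of $f$ in $\mathbb{Q}[x]$ of the form $x^m-a$ with $m\ge1$ and $a\in\mathbb{Q}$. Height of a polynomial: for nonzero $f\in\mathbb{Q}[x]$, let $r$ be the least positive rational with $rf\in\mathbb{Z}[x]$; if $rf=\sum_i a_ix^{e_i}$ with $a_i\in\mathbb{Z}$, then $H(f)=\max_i|a_i|$. For a nonzero rational number $a=p/q$ in lowest terms, $H(a)=\max(|p|,|q|)$. *)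

theory Defs
  imports Complex_Main "HOL-Computational_Algebra.Polynomial"
begin

definition poly_height :: "rat poly \<Rightarrow> rat" where
  "poly_height f =
     (let r = (LEAST r::rat. 0 < r \<and> (\<forall>i. coeff (smult r f) i \<in> \<int>))
      in Max (abs ` set (coeffs (smult r f))))"

definition rat_height :: "rat \<Rightarrow> int" where
  "rat_height a = (case quotient_of a of (p, q) \<Rightarrow> max \<bar>p\<bar> \<bar>q\<bar>)"

definition binomial_multiple :: "rat poly \<Rightarrow> nat \<Rightarrow> rat \<Rightarrow> bool" where
  "binomial_multiple f m a \<longleftrightarrow> m \<ge> 1 \<and> f dvd (monom 1 m - [:a:])"

end

theory Submission
  imports Defs
    "HOL-Computational_Algebra.Fundamental_Theorem_Algebra"
    "HOL-Computational_Algebra.Polynomial_Factorial"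
    "HOL-Computational_Algebra.Field_as_Ring"
    "HOL-Library.Real_Mod"
begin

(* For N = 2 * floor (sqrt d) take f the product of the polynomials (x^k - 2^k) / (x - 2), k running
   over the maximal prime powers k <= N. These factors are pairwise coprime (a common root 2 w would
   give w^k = w^l = 1 with coprime k, l, hence w = 1), and each divides x^M - 2^M for
   M = lcm(1, ..., N), so f does too. Conversely, if x^m - a is divisible by the factor for k >= 3,
   it vanishes at 2 w and 2 w^2 for a primitive k-th root of unity w, so w^m = w^(2 m) = 1 and k | m;
   thus M | m. The degree and the coefficients of f are bounded by N^2 <= 4 d and 2^(N^2), while
   M >= 4^(N div 2 - 1) > exp (sqrt d). *)

lemma eq_1_if_powers_eq_1_coprime:
  fixes w :: "'a::comm_ring_1"
  assumes "coprime a b" "a > 0" "w ^ a = 1" "w ^ b = 1"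
  shows "w = 1"
proof -
  obtain x y where xy: "a * x = b * y + 1"
    using bezout_nat[of a b] assms by auto
  have "w = (w ^ b) ^ y * w" using assms by simp
  also have "\<dots> = (w ^ a) ^ x" by (simp add: xy power_add flip: power_mult)
  also have "\<dots> = 1" using assms by simp
  finally show ?thesis .
qed

lemma cis_2pi_div_power_eq_1_iff:
  assumes "k > 0"
  shows "cis (2 * pi / real k) ^ m = 1 \<longleftrightarrow> k dvd m"
proof -
  have "cis (2 * pi / real k) ^ m = 1 \<longleftrightarrow> (\<exists>n::int. real m = of_int n * real k)"
    using assms by (simp add: DeMoivre cis_eq_1_iff field_simps)
  also have "\<dots> \<longleftrightarrow> int k dvd int m"
    by (metis dvd_def mult.commute of_int_eq_iff of_int_mult of_int_of_nat_eq)
  finally show ?thesis by simp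
qed

lemma prod_dvd_if_pairwise_coprime:
  fixes f :: "'b \<Rightarrow> 'a::semiring_gcd"
  assumes "finite A" "pairwise (\<lambda>x y. coprime (f x) (f y)) A" "\<And>x. x \<in> A \<Longrightarrow> f x dvd q"
  shows "prod f A dvd q"
  using assms
proof (induction A rule: finite_induct)
  case (insert x A)
  have "coprime (f x) (prod f A)"
    using insert.hyps insert.prems(1) by (intro prod_coprime_right) (auto dest: pairwiseD)
  then show ?case
    using insert by (simp add: divides_mult pairwise_insert)
qed simp

lemma map_poly_of_int_mult:
  "map_poly (of_int :: int \<Rightarrow> 'a::comm_ring_1) (p * q) = map_poly of_int p * map_poly of_int q"
  by (rule poly_eqI) (simp add: coeff_map_poly coeff_mult)

lemma map_poly_of_int_prod:
  "map_poly (of_int :: int \<Rightarrow> 'a::comm_ring_1) (\<Prod>x\<in>A. f x) = (\<Prod>x\<in>A. map_poly of_int (f x))"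
  by (induction A rule: infinite_finite_induct) (auto simp: map_poly_of_int_mult)

lemma map_poly_of_rat_mult:
  "map_poly (of_rat :: rat \<Rightarrow> 'a::field_char_0) (p * q) = map_poly of_rat p * map_poly of_rat q"
  by (rule poly_eqI) (simp add: coeff_map_poly coeff_mult of_rat_sum of_rat_mult)

lemma map_poly_of_rat_prod:
  "map_poly (of_rat :: rat \<Rightarrow> 'a::field_char_0) (\<Prod>x\<in>A. f x) = (\<Prod>x\<in>A. map_poly of_rat (f x))"
  by (induction A rule: infinite_finite_induct) (auto simp: map_poly_of_rat_mult)

lemma map_poly_of_rat_dvd:
  "p dvd q \<Longrightarrow> map_poly (of_rat :: rat \<Rightarrow> 'a::field_char_0) p dvd map_poly of_rat q"
  by (elim dvdE) (simp add: map_poly_of_rat_mult)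

lemma map_poly_of_rat_binomial:
  "map_poly (of_rat :: rat \<Rightarrow> 'a::field_char_0) (monom 1 m - [:a:]) = monom 1 m - [:of_rat a:]"
  by (rule poly_eqI) (auto simp: coeff_map_poly coeff_monom coeff_pCons of_rat_diff split: nat.split)

lemma coprime_if_no_common_complex_root:
  fixes p q :: "rat poly"
  assumes "p \<noteq> 0"
    and "\<And>z::complex. poly (map_poly of_rat p) z = 0 \<Longrightarrow> poly (map_poly of_rat q) z \<noteq> 0"
  shows "coprime p q"
proof (rule coprimeI, rule ccontr)
  fix r assume "r dvd p" "r dvd q" "\<not> is_unit r"
  moreover have "r \<noteq> 0" using \<open>r dvd p\<close> assms(1) by auto
  ultimately have "degree r \<noteq> 0"
    using is_unit_iff_degree by blast
  then have "\<not> constant (poly (map_poly of_rat r :: complex poly))"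
    by (simp add: constant_degree degree_map_poly)
  then obtain z where "poly (map_poly of_rat r) z = (0::complex)"
    using fundamental_theorem_of_algebra by blast
  then show False
    using assms(2) map_poly_of_rat_dvd[OF \<open>r dvd p\<close>] map_poly_of_rat_dvd[OF \<open>r dvd q\<close>]
    by (meson dvd_trans poly_eq_0_iff_dvd)
qed

lemma coeff_prod_nonneg:
  fixes g :: "'b \<Rightarrow> 'a::linordered_idom poly"
  shows "(\<And>x j. x \<in> A \<Longrightarrow> coeff (g x) j \<ge> 0) \<Longrightarrow> coeff (\<Prod>x\<in>A. g x) i \<ge> 0"
proof (induction A arbitrary: i rule: infinite_finite_induct)
  case (insert x A)
  then show ?case by (auto simp: coeff_mult intro!: sum_nonneg mult_nonneg_nonneg)
qed auto

lemma coeff_le_poly_1: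
  fixes p :: "int poly"
  assumes "\<And>j. coeff p j \<ge> 0"
  shows "coeff p i \<le> poly p 1"
proof -
  have "coeff p i \<le> (\<Sum>j\<le>max i (degree p). coeff p j)"
    using assms by (intro member_le_sum) auto
  also have "\<dots> = poly p 1"
    by (simp add: poly_altdef coeff_eq_0 sum.mono_neutral_right[of "{..max i (degree p)}" "{..degree p}"])
  finally show ?thesis .
qed

lemma rat_height_of_int: "rat_height (of_int n) = max \<bar>n\<bar> 1"
  by (simp add: rat_height_def)

lemma poly_height_of_int_monic_le:
  fixes f :: "int poly"
  assumes "lead_coeff f = 1" "\<And>i. \<bar>coeff f i\<bar> \<le> B"
  shows "poly_height (map_poly of_int f) \<le> of_int B"
proof -
  let ?F = "map_poly of_int f :: rat poly"
  have coeff_F: "coeff ?F i = of_int (coeff f i)" for i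
    by (simp add: coeff_map_poly)
  have "(LEAST r::rat. 0 < r \<and> (\<forall>i. coeff (smult r ?F) i \<in> \<int>)) = 1"
  proof (rule Least_equality)
    fix r :: rat assume r: "0 < r \<and> (\<forall>i. coeff (smult r ?F) i \<in> \<int>)"
    then have "r \<in> \<int>"
      using coeff_F[of "degree f"] assms(1) by (metis coeff_smult mult.right_neutral of_int_1)
    with r show "1 \<le> r" by (auto elim!: Ints_cases)
  qed (simp add: coeff_F)
  moreover have "f \<noteq> 0" using assms(1) by auto
  ultimately show ?thesis
    unfolding poly_height_def using assms(2) by (auto simp: coeffs_def coeff_F map_poly_eq_0_iff
        simp flip: of_int_abs)
qed

section \<open>Geometric polynomials\<close>

fun geom_poly :: "'a::comm_ring_1 \<Rightarrow> nat \<Rightarrow> 'a poly" where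
  "geom_poly c 0 = 0"
| "geom_poly c (Suc k) = monom 1 k + smult c (geom_poly c k)"

lemma linear_mult_geom_poly: "[:-c, 1:] * geom_poly c k = monom 1 k - [:c ^ k:]"
proof (induction k)
  case (Suc k)
  have "[:-c, 1:] * geom_poly c (Suc k) = [:-c, 1:] * monom 1 k + smult c ([:-c, 1:] * geom_poly c k)"
    by (simp only: geom_poly.simps distrib_left mult_smult_right)
  also have "\<dots> = [:-c, 1:] * monom 1 k + smult c (monom 1 k - [:c ^ k:])"
    by (simp only: Suc)
  also have "\<dots> = monom 1 (Suc k) - [:c ^ Suc k:]"
    by (rule poly_eqI) (auto simp: coeff_monom coeff_pCons algebra_simps split: nat.split)
  finally show ?case .
qed simp

lemma coeff_geom_poly: "coeff (geom_poly c k) i = (if i < k then c ^ (k - 1 - i) else 0)"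
proof (induction k arbitrary: i)
  case (Suc k)
  then show ?case
    by (cases "i < k") (auto simp: coeff_monom Suc_diff_Suc simp flip: power_Suc)
qed simp

lemma degree_geom_poly: "degree (geom_poly c k) = k - 1"
proof (cases k)
  case (Suc j)
  then show ?thesis
    by (intro le_antisym[OF degree_le le_degree]) (auto simp: coeff_geom_poly simp del: geom_poly.simps)
qed simp

lemma lead_coeff_geom_poly: "k > 0 \<Longrightarrow> lead_coeff (geom_poly c k) = 1"
  by (simp add: degree_geom_poly coeff_geom_poly del: geom_poly.simps)

lemma geom_poly_nonzero: "k > 0 \<Longrightarrow> geom_poly c k \<noteq> 0"
  using lead_coeff_geom_poly[of k c] by (auto simp del: geom_poly.simps)

lemma map_poly_geom_poly:
  assumes "f 0 = 0" "\<And>n. f (c ^ n) = d ^ n"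
  shows "map_poly f (geom_poly c k) = geom_poly d k"
  by (rule poly_eqI) (simp add: coeff_map_poly coeff_geom_poly assms)

lemma poly_geom_poly: "poly (geom_poly c k) z * (z - c) = z ^ k - c ^ k"
  using arg_cong[OF linear_mult_geom_poly[of c k], of "\<lambda>p. poly p z"]
  by (simp add: poly_monom algebra_simps)

lemma poly_geom_poly_base: "poly (geom_poly c k) c = of_nat k * c ^ (k - 1)"
proof (induction k)
  case (Suc k)
  then show ?case by (cases k) (simp_all add: poly_monom algebra_simps)
qed simp

lemma geom_poly_dvd_binomial:
  assumes "k dvd m"
  shows "geom_poly c k dvd monom 1 m - [:c ^ m:]"
proof -
  obtain t where t: "m = k * t" using assms by blast
  have "geom_poly c k dvd monom 1 k - [:c ^ k:]"
    by (metis dvd_triv_right linear_mult_geom_poly)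
  also have "\<dots> dvd (monom 1 k) ^ t - [:c ^ k:] ^ t"
    using power_diff_sumr2 by (rule dvdI)
  also have "(monom 1 k) ^ t - [:c ^ k:] ^ t = monom 1 m - [:c ^ m:]"
    by (simp add: monom_power poly_const_pow t power_mult)
  finally show ?thesis .
qed

lemma poly_geom_poly_eq_0_iff:
  fixes c z :: "'a::idom"
  assumes "z \<noteq> c"
  shows "poly (geom_poly c k) z = 0 \<longleftrightarrow> z ^ k = c ^ k"
  using poly_geom_poly[of c k z] assms by auto

lemma power_eq_power_if_poly_geom_poly_eq_0:
  "poly (geom_poly c k) z = 0 \<Longrightarrow> z ^ k = c ^ k"
  using poly_geom_poly[of c k z] by simp

lemma poly_geom_poly_base_neq_0:
  fixes c :: "'a::{idom,ring_char_0}"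
  shows "k > 0 \<Longrightarrow> c \<noteq> 0 \<Longrightarrow> poly (geom_poly c k) c \<noteq> 0"
  by (simp add: poly_geom_poly_base)

lemma coprime_geom_poly:
  fixes c :: rat
  assumes "coprime a b" "a > 0" "c \<noteq> 0"
  shows "coprime (geom_poly c a) (geom_poly c b)"
proof (rule coprime_if_no_common_complex_root)
  show "geom_poly c a \<noteq> 0" using assms(2) by (rule geom_poly_nonzero)
  define C :: complex where "C = of_rat c"
  have "C \<noteq> 0" using assms(3) by (simp add: C_def)
  have map: "map_poly of_rat (geom_poly c k) = geom_poly C k" for k
    unfolding C_def by (rule map_poly_geom_poly) (simp_all add: of_rat_power)
  fix z :: complex
  assume za: "poly (map_poly of_rat (geom_poly c a)) z = 0"
  show "poly (map_poly of_rat (geom_poly c b)) z \<noteq> 0"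
  proof
    assume zb: "poly (map_poly of_rat (geom_poly c b)) z = 0"
    have "(z / C) ^ a = 1" "(z / C) ^ b = 1"
      using za zb \<open>C \<noteq> 0\<close> unfolding map power_divide
      by (simp_all add: power_eq_power_if_poly_geom_poly_eq_0)
    then have "z / C = 1"
      by (rule eq_1_if_powers_eq_1_coprime[OF assms(1,2)])
    then have "z = C"
      using \<open>C \<noteq> 0\<close> by simp
    then show False
      using za poly_geom_poly_base_neq_0[OF assms(2) \<open>C \<noteq> 0\<close>] unfolding map by simp
  qed
qed

lemma dvd_if_geom_poly_dvd_binomial:
  fixes c a :: complex
  assumes "k \<ge> 3" "c \<noteq> 0" "geom_poly c k dvd monom 1 m - [:a:]"
  shows "k dvd m"
proof -
  have root: "z ^ m = a" if "z \<noteq> c" "z ^ k = c ^ k" for z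
  proof -
    have "poly (monom 1 m - [:a:]) z = 0"
      using assms(3) poly_geom_poly_eq_0_iff[OF that(1)] that(2)
      by (meson dvd_trans poly_eq_0_iff_dvd)
    then show ?thesis by (simp add: poly_monom)
  qed
  define w where "w = cis (2 * pi / real k)"
  have w: "w ^ j = 1 \<longleftrightarrow> k dvd j" for j
    unfolding w_def using assms(1) by (intro cis_2pi_div_power_eq_1_iff) simp
  have "k \<noteq> 0" "\<not> k dvd 1" "\<not> k dvd 2" using assms(1) by (auto dest: dvd_imp_le)
  then have "w \<noteq> 1" "w ^ 2 \<noteq> 1" "w ^ k = 1" "(w ^ 2) ^ k = 1"
    using w[of 1] w[of 2] w[of k] w[of "2 * k"] by (simp_all flip: power_mult)
  then have "(c * w) ^ m = a" "(c * w ^ 2) ^ m = a"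
    using assms(2) by (intro root; simp add: power_mult_distrib)+
  then have "c ^ m * w ^ m = c ^ m * (w ^ m) ^ 2"
    by (metis power_mult_distrib power_mult mult.commute)
  then have "w ^ m = (w ^ m) ^ 2"
    using assms(2) by simp
  moreover have "w \<noteq> 0" unfolding w_def by (rule cis_neq_zero)
  ultimately have "w ^ m = 1" by (simp add: power2_eq_square)
  then show ?thesis using w by blast
qed

lemma binomial_multiple_prod_geom_poly:
  fixes c :: rat
  assumes "finite Q" "pairwise coprime Q" "\<And>k. k \<in> Q \<Longrightarrow> k > 0" "c \<noteq> 0"
  shows "binomial_multiple (\<Prod>k\<in>Q. geom_poly c k) (\<Prod>Q) (c ^ \<Prod>Q)"
  unfolding binomial_multiple_def
proof
  show "1 \<le> \<Prod>Q" using assms(3) by (simp add: Suc_le_eq prod_pos)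
  show "(\<Prod>k\<in>Q. geom_poly c k) dvd monom 1 (\<Prod>Q) - [:c ^ \<Prod>Q:]"
  proof (rule prod_dvd_if_pairwise_coprime)
    show "pairwise (\<lambda>j k. coprime (geom_poly c j) (geom_poly c k)) Q"
      using assms(2-4) by (auto simp: pairwise_def coprime_geom_poly)
    show "geom_poly c k dvd monom 1 (\<Prod>Q) - [:c ^ \<Prod>Q:]" if "k \<in> Q" for k
      using assms(1) that by (intro geom_poly_dvd_binomial dvd_prodI[of Q k id, simplified])
  qed (rule assms(1))
qed

lemma prod_dvd_if_binomial_multiple_prod_geom_poly:
  fixes c :: rat
  assumes "finite Q" "pairwise coprime Q" "\<And>k. k \<in> Q \<Longrightarrow> k \<ge> 3" "c \<noteq> 0"
    and "binomial_multiple (\<Prod>k\<in>Q. geom_poly c k) m a"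
  shows "\<Prod>Q dvd m"
proof (rule prod_dvd_if_pairwise_coprime[where f = id, simplified])
  fix k assume "k \<in> Q"
  have map: "map_poly of_rat (geom_poly c j) = geom_poly (of_rat c :: complex) j" for j
    by (rule map_poly_geom_poly) (simp_all add: of_rat_power)
  have "geom_poly (of_rat c) k dvd (\<Prod>j\<in>Q. geom_poly (of_rat c :: complex) j)"
    using assms(1) \<open>k \<in> Q\<close> by (rule dvd_prodI)
  also have "\<dots> = map_poly of_rat (\<Prod>j\<in>Q. geom_poly c j)"
    by (simp add: map_poly_of_rat_prod map)
  also have "\<dots> dvd map_poly of_rat (monom 1 m - [:a:])"
    using assms(5) unfolding binomial_multiple_def by (simp add: map_poly_of_rat_dvd)
  finally show "k dvd m"
    using assms(3)[OF \<open>k \<in> Q\<close>] assms(4)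
    by (intro dvd_if_geom_poly_dvd_binomial[of k "of_rat c" m "of_rat a"])
      (simp_all add: map_poly_of_rat_binomial)
qed (use assms(1,2) in \<open>simp_all add: pairwise_def\<close>)

section \<open>A lower bound for common multiples of n+1, ..., 2n+1\<close>

definition binomial_recip_sum :: "nat \<Rightarrow> real \<Rightarrow> real" where
  "binomial_recip_sum n a = (\<Sum>j\<le>n. (-1) ^ j * real (n choose j) / (a + real j))"

lemma binomial_recip_sum_Suc:
  "binomial_recip_sum (Suc n) a = binomial_recip_sum n a - binomial_recip_sum n (a + 1)"
proof -
  define g where "g j = (-1) ^ j * real (n choose j) / (a + real j)" for j
  have "binomial_recip_sum (Suc n) a
      = 1 / a + (\<Sum>j\<le>n. (-1) ^ Suc j * real (Suc n choose Suc j) / (a + real (Suc j)))"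
    unfolding binomial_recip_sum_def by (subst sum.atMost_Suc_shift) simp
  also have "(\<Sum>j\<le>n. (-1) ^ Suc j * real (Suc n choose Suc j) / (a + real (Suc j)))
      = (\<Sum>j\<le>n. g (Suc j)) - binomial_recip_sum n (a + 1)"
    unfolding g_def binomial_recip_sum_def sum_subtractf[symmetric]
    by (intro sum.cong) (simp_all add: add_divide_distrib diff_divide_distrib algebra_simps)
  also have "(\<Sum>j\<le>n. g (Suc j)) = (\<Sum>j\<le>Suc n. g j) - g 0"
    by (subst sum.atMost_Suc_shift) simp
  also have "(\<Sum>j\<le>Suc n. g j) = (\<Sum>j\<le>n. g j)"
    by (simp add: g_def)
  finally show ?thesis unfolding binomial_recip_sum_def g_def by simp
qed

lemma binomial_recip_sum_eq: "a > 0 \<Longrightarrow> binomial_recip_sum n a = fact n / pochhammer a (Suc n)"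
proof (induction n arbitrary: a)
  case 0
  then show ?case by (simp add: binomial_recip_sum_def)
next
  case (Suc n)
  define Q where "Q = pochhammer (a + 1) n"
  define D where "D = a + 1 + real n"
  have "Q > 0" unfolding Q_def using Suc.prems by (intro pochhammer_pos) simp
  have "D > 0" unfolding D_def using Suc.prems by simp
  have p1: "pochhammer a (Suc n) = a * Q"
    unfolding Q_def by (rule pochhammer_rec)
  have p2: "pochhammer (a + 1) (Suc n) = Q * D"
    unfolding Q_def D_def by (rule pochhammer_Suc)
  have p3: "pochhammer a (Suc (Suc n)) = a * Q * D"
    unfolding D_def by (simp only: pochhammer_Suc[of a "Suc n"] p1) simp
  have "fact n / (a * Q) - fact n / (Q * D) = fact (Suc n) / (a * Q * D)"
    using Suc.prems \<open>Q > 0\<close> \<open>D > 0\<close> by (simp add: field_simps) (simp add: D_def algebra_simps)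
  then show ?case
    using Suc by (simp only: binomial_recip_sum_Suc Suc.IH p1 p2 p3)
qed

lemma binomial_recip_sum_central: "binomial_recip_sum n (real n + 1) = fact n * fact n / fact (2 * n + 1)"
proof -
  have "(fact (2 * n + 1) :: real) = pochhammer 1 (n + Suc n)"
    by (simp add: pochhammer_fact mult_2)
  also have "\<dots> = pochhammer 1 n * pochhammer (1 + real n) (Suc n)"
    by (rule pochhammer_product')
  also have "\<dots> = fact n * pochhammer (real n + 1) (Suc n)"
    by (simp add: pochhammer_fact add.commute)
  finally show ?thesis
    by (simp add: binomial_recip_sum_eq)
qed

lemma four_power_mult_fact_le: "4 ^ n * fact n * fact n \<le> (fact (2 * n + 1) :: nat)"
proof (induction n)
  case (Suc n)
  have "4 ^ Suc n * fact (Suc n) * fact (Suc n) = (4 * (n + 1) * (n + 1)) * (4 ^ n * fact n * fact n :: nat)"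
    by (simp add: algebra_simps)
  also have "\<dots> \<le> ((2 * n + 3) * (2 * n + 2)) * fact (2 * n + 1)"
  proof (rule mult_mono)
    show "4 * (n + 1) * (n + 1) \<le> (2 * n + 3) * (2 * n + 2)"
      by (simp add: algebra_simps)
  qed (use Suc in simp_all)
  also have "\<dots> = fact (2 * Suc n + 1)"
    by (simp add: algebra_simps)
  finally show ?case .
qed simp

text \<open>The alternating sum turns the divisibilities into the integrality of
  \<open>P * n!\<^sup>2 / (2n+1)!\<close>, a positive number.\<close>

lemma four_power_le_common_multiple:
  fixes P n :: nat
  assumes "\<And>j. n + 1 \<le> j \<Longrightarrow> j \<le> 2 * n + 1 \<Longrightarrow> j dvd P" "P > 0"
  shows "4 ^ n \<le> P"
proof -
  define S where "S = (\<Sum>j\<le>n. (-1) ^ j * int (n choose j) * int (P div (n + 1 + j)))"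
  have "real P * binomial_recip_sum n (real n + 1) = of_int S"
    unfolding binomial_recip_sum_def S_def sum_distrib_left of_int_sum
  proof (rule sum.cong)
    fix j assume "j \<in> {..n}"
    then have "(n + 1 + j) dvd P" by (intro assms) auto
    then show "real P * ((-1) ^ j * real (n choose j) / (real n + 1 + real j)) =
        of_int ((-1) ^ j * int (n choose j) * int (P div (n + 1 + j)))"
      by (simp add: real_of_nat_div field_simps)
  qed simp
  then have "real P * (fact n * fact n) / fact (2 * n + 1) = of_int S"
    by (simp add: binomial_recip_sum_central)
  moreover have "real P * (fact n * fact n) / fact (2 * n + 1) > 0"
    using assms(2) by simp
  ultimately have "1 \<le> real P * (fact n * fact n) / fact (2 * n + 1)"
    by simp
  then have "real (fact (2 * n + 1)) \<le> real P * (fact n * fact n)"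
    by (simp only: le_divide_eq fact_gt_zero) (simp add: algebra_simps)
  also have "\<dots> \<le> real (P * fact n * fact n)" by simp
  finally have "4 ^ n * fact n * fact n \<le> P * fact n * fact n"
    using four_power_mult_fact_le[of n] by linarith
  then show ?thesis by simp
qed

section \<open>Maximal prime powers\<close>

definition max_prime_powers :: "nat \<Rightarrow> nat set" where
  "max_prime_powers N = {p ^ Max {e. p ^ e \<le> N} | p. prime p \<and> p \<le> N}"

lemma finite_exponents_power_le:
  fixes p :: nat
  assumes "p > 1"
  shows "finite {e. p ^ e \<le> N}"
proof (rule finite_subset)
  show "{e. p ^ e \<le> N} \<subseteq> {..N}"
  proof
    fix e assume "e \<in> {e. p ^ e \<le> N}"
    moreover have "e < 2 ^ e" by (rule less_exp)
    moreover have "(2::nat) ^ e \<le> p ^ e" using assms by (intro power_mono) simp_all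
    ultimately show "e \<in> {..N}" by (simp del: less_exp)
  qed
qed simp

lemma power_Max_exponents_le:
  fixes p :: nat
  assumes "p > 1" "N \<ge> 1"
  shows "p ^ Max {e. p ^ e \<le> N} \<le> N"
proof -
  have "0 \<in> {e. p ^ e \<le> N}" using assms(2) by simp
  then have "{e. p ^ e \<le> N} \<noteq> {}" by blast
  from Max_in[OF finite_exponents_power_le[OF assms(1)] this] show ?thesis by simp
qed

lemma le_Max_exponents:
  fixes p :: nat
  assumes "p > 1" "p ^ e \<le> N"
  shows "e \<le> Max {e. p ^ e \<le> N}"
  by (rule Max_ge[OF finite_exponents_power_le[OF assms(1)]]) (simp add: assms(2))

lemma finite_max_prime_powers: "finite (max_prime_powers N)"
  unfolding max_prime_powers_def by simp

lemma max_prime_powers_le: "k \<in> max_prime_powers N \<Longrightarrow> k \<le> N"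
  unfolding max_prime_powers_def
  by (auto intro!: power_Max_exponents_le prime_gt_1_nat dest: prime_gt_0_nat)

lemma max_prime_powers_pos: "k \<in> max_prime_powers N \<Longrightarrow> k > 0"
  unfolding max_prime_powers_def by (auto dest: prime_gt_0_nat)

lemma max_prime_powers_ge_3: "N \<ge> 4 \<Longrightarrow> k \<in> max_prime_powers N \<Longrightarrow> k \<ge> 3"
proof (clarsimp simp: max_prime_powers_def)
  fix p assume "N \<ge> 4" "prime p" "p \<le> N"
  then have p1: "p > 1" by (simp add: prime_gt_1_nat del: One_nat_def)
  show "3 \<le> p ^ Max {e. p ^ e \<le> N}"
  proof (cases "p = 2")
    case True
    then have "2 \<le> Max {e. p ^ e \<le> N}" using \<open>N \<ge> 4\<close> by (intro le_Max_exponents) simp_all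
    then have "p ^ 2 \<le> p ^ Max {e. p ^ e \<le> N}" using p1 by (intro power_increasing) simp_all
    then show ?thesis using True by simp
  next
    case False
    then have "p \<ge> 3" using p1 by simp
    moreover have "1 \<le> Max {e. p ^ e \<le> N}" using \<open>p \<le> N\<close> p1 by (intro le_Max_exponents) simp_all
    then have "p ^ 1 \<le> p ^ Max {e. p ^ e \<le> N}" using p1 by (intro power_increasing) simp_all
    ultimately show ?thesis by simp
  qed
qed

lemma card_max_prime_powers_le: "card (max_prime_powers N) \<le> N"
proof -
  have "max_prime_powers N \<subseteq> {1..N}"
    using max_prime_powers_le max_prime_powers_pos by (auto simp: Suc_le_eq)
  then show ?thesis using card_mono[of "{1..N}"] by fastforce
qed

lemma sum_max_prime_powers_le: "\<Sum>(max_prime_powers N) \<le> N * N"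
proof -
  have "\<Sum>(max_prime_powers N) \<le> card (max_prime_powers N) * N"
    using sum_bounded_above[of "max_prime_powers N" id N] max_prime_powers_le by simp
  also have "\<dots> \<le> N * N"
    using card_max_prime_powers_le by simp
  finally show ?thesis .
qed

lemma pairwise_coprime_max_prime_powers: "pairwise coprime (max_prime_powers N)"
  unfolding max_prime_powers_def pairwise_def by (auto intro: primes_coprime)

lemma dvd_prod_max_prime_powers:
  assumes "1 \<le> j" "j \<le> N"
  shows "j dvd \<Prod>(max_prime_powers N)"
proof -
  have "(\<Prod>p\<in>prime_factors j. p ^ multiplicity p j) dvd \<Prod>(max_prime_powers N)"
  proof (rule prod_dvd_if_pairwise_coprime)
    show "pairwise (\<lambda>p q. coprime (p ^ multiplicity p j) (q ^ multiplicity q j)) (prime_factors j)"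
      by (auto simp: pairwise_def coprime_power_left_iff coprime_power_right_iff
          intro: primes_coprime dest: in_prime_factors_imp_prime)
    fix p assume "p \<in> prime_factors j"
    then have "prime p" "p dvd j" by auto
    have "p ^ multiplicity p j \<le> j" "p \<le> j"
      using assms \<open>p dvd j\<close> by (simp_all add: dvd_imp_le multiplicity_dvd)
    then have p: "prime p" "p ^ multiplicity p j \<le> N" "p \<le> N"
      using assms \<open>prime p\<close> by simp_all
    then have "p ^ multiplicity p j dvd p ^ Max {e. p ^ e \<le> N}"
      by (intro le_imp_power_dvd le_Max_exponents prime_gt_1_nat)
    also have "\<dots> dvd \<Prod>(max_prime_powers N)"
      using p by (intro dvd_prodI[of _ _ id, simplified] finite_max_prime_powers)
        (auto simp: max_prime_powers_def)
    finally show "p ^ multiplicity p j dvd \<Prod>(max_prime_powers N)" .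
  qed simp
  then show ?thesis
    using assms by (simp add: prime_factorization_nat[symmetric])
qed

lemma four_power_le_prod_max_prime_powers:
  "2 * n + 1 \<le> N \<Longrightarrow> 4 ^ n \<le> \<Prod>(max_prime_powers N)"
  by (intro four_power_le_common_multiple dvd_prod_max_prime_powers)
    (simp_all add: prod_pos max_prime_powers_pos finite_max_prime_powers)

definition lcm_poly :: "nat \<Rightarrow> int poly" where
  "lcm_poly N = (\<Prod>k\<in>max_prime_powers N. geom_poly 2 k)"

lemma map_poly_of_int_lcm_poly:
  "map_poly of_int (lcm_poly N) = (\<Prod>k\<in>max_prime_powers N. geom_poly (2::'a::comm_ring_1) k)"
  unfolding lcm_poly_def map_poly_of_int_prod
  by (intro prod.cong refl map_poly_geom_poly) simp_all

lemma lead_coeff_lcm_poly: "lead_coeff (lcm_poly N) = 1"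
  unfolding lcm_poly_def lead_coeff_prod
  by (intro prod.neutral ballI lead_coeff_geom_poly max_prime_powers_pos)

lemma lcm_poly_nonzero: "lcm_poly N \<noteq> 0"
  using lead_coeff_lcm_poly[of N] by auto

lemma degree_lcm_poly_le: "degree (lcm_poly N) \<le> N * N"
proof -
  have "degree (lcm_poly N) = (\<Sum>k\<in>max_prime_powers N. k - 1)"
    unfolding lcm_poly_def
    by (simp add: degree_prod_eq_sum_degree geom_poly_nonzero max_prime_powers_pos degree_geom_poly)
  also have "\<dots> \<le> \<Sum>(max_prime_powers N)"
    by (intro sum_mono) simp
  finally show ?thesis
    using sum_max_prime_powers_le by (rule order.trans)
qed

lemma poly_height_lcm_poly_le: "poly_height (map_poly of_int (lcm_poly N)) \<le> 2 ^ (N * N)"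
proof -
  have nonneg: "coeff (lcm_poly N) i \<ge> 0" for i
    unfolding lcm_poly_def by (intro coeff_prod_nonneg) (simp add: coeff_geom_poly)
  have "poly (geom_poly 2 k) 1 = (2::int) ^ k - 1" for k
    using poly_geom_poly[of "2::int" k 1] by simp
  then have "poly (lcm_poly N) 1 = (\<Prod>k\<in>max_prime_powers N. 2 ^ k - 1)"
    unfolding lcm_poly_def poly_prod by simp
  also have "\<dots> \<le> (\<Prod>k\<in>max_prime_powers N. 2 ^ k)"
    by (intro prod_mono) simp
  also have "\<dots> = 2 ^ \<Sum>(max_prime_powers N)"
    by (simp add: power_sum)
  also have "\<dots> \<le> 2 ^ (N * N)"
    using sum_max_prime_powers_le by (intro power_increasing) simp_all
  finally have "\<bar>coeff (lcm_poly N) i\<bar> \<le> 2 ^ (N * N)" for i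
    using coeff_le_poly_1[OF nonneg, of i] nonneg[of i] by simp
  then have "poly_height (map_poly of_int (lcm_poly N)) \<le> of_int (2 ^ (N * N))"
    by (rule poly_height_of_int_monic_le[OF lead_coeff_lcm_poly])
  then show ?thesis by simp
qed

lemma binomial_multiple_lcm_poly:
  "binomial_multiple (map_poly of_int (lcm_poly N)) (\<Prod>(max_prime_powers N)) (2 ^ \<Prod>(max_prime_powers N))"
  unfolding map_poly_of_int_lcm_poly
  using binomial_multiple_prod_geom_poly finite_max_prime_powers pairwise_coprime_max_prime_powers
    max_prime_powers_pos by simp

lemma prod_max_prime_powers_le_if_binomial_multiple:
  assumes "N \<ge> 4" "binomial_multiple (map_poly of_int (lcm_poly N)) m a"
  shows "\<Prod>(max_prime_powers N) \<le> m"
proof (rule dvd_imp_le)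
  show "\<Prod>(max_prime_powers N) dvd m"
    using assms finite_max_prime_powers pairwise_coprime_max_prime_powers max_prime_powers_ge_3
    by (intro prod_dvd_if_binomial_multiple_prod_geom_poly[of _ 2 m a])
      (simp_all add: map_poly_of_int_lcm_poly)
  show "m > 0"
    using assms(2) by (simp add: binomial_multiple_def)
qed

lemma three_power_lt_four_power: "10 \<le> s \<Longrightarrow> 3 ^ (s + 1) < (4::nat) ^ (s - 1)"
proof (induction s rule: nat_induct_at_least)
  case (Suc s)
  have "3 ^ (Suc s + 1) = 3 * (3::nat) ^ (s + 1)" by simp
  also have "\<dots> < 4 * 4 ^ (s - 1)" using Suc.IH by simp
  also have "\<dots> = 4 ^ (Suc s - 1)" using Suc.hyps by (simp add: power_Suc[symmetric] del: power_Suc)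
  finally show ?case .
qed simp

lemma exp_sqrt_lt_four_power:
  assumes "100 \<le> d"
  shows "exp (sqrt (real d)) < 4 ^ (nat \<lfloor>sqrt (real d)\<rfloor> - 1)"
proof -
  define s where "s = nat \<lfloor>sqrt (real d)\<rfloor>"
  have "10 \<le> sqrt (real d)" using assms by (intro real_le_rsqrt) simp
  then have "10 \<le> s" unfolding s_def by (simp add: le_nat_iff le_floor_iff)
  have "exp (sqrt (real d)) < exp (real (s + 1))"
    unfolding s_def by simp linarith
  also have "\<dots> = exp 1 ^ (s + 1)"
    using exp_of_nat_mult[of "s + 1" 1] by simp
  also have "\<dots> \<le> 3 ^ (s + 1)"
    by (intro power_mono exp_le) simp
  also have "\<dots> < 4 ^ (s - 1)"
    using three_power_lt_four_power[OF \<open>10 \<le> s\<close>] by (metis of_nat_less_iff of_nat_numeral of_nat_power)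
  finally show ?thesis unfolding s_def .
qed

lemma four_mult_le_mult_ln: "81 \<le> d \<Longrightarrow> 4 * real d \<le> real d * ln (real d)"
proof -
  assume "81 \<le> d"
  have "exp (4::real) = exp 1 ^ 4" by (simp flip: exp_of_nat_mult)
  also have "\<dots> \<le> 3 ^ 4" by (intro power_mono exp_le) simp
  also have "\<dots> \<le> real d" using \<open>81 \<le> d\<close> by simp
  finally have "4 \<le> ln (real d)" using \<open>81 \<le> d\<close> by (subst ln_ge_iff) auto
  then show ?thesis by (simp add: mult.commute mult_left_mono)
qed

lemma two_power_le_exp_mult_ln: "16 \<le> d \<Longrightarrow> 2 ^ (4 * d) \<le> exp (2 * real d * ln (real d))"
proof -
  assume "16 \<le> d"
  have "(2::real) ^ (4 * d) = 16 ^ d" by (simp add: power_mult)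
  also have "\<dots> \<le> (real d * real d) ^ d"
    using \<open>16 \<le> d\<close> mult_mono[of 4 "real d" 4 "real d"] by (intro power_mono) simp_all
  also have "\<dots> = exp (ln (real d)) ^ (2 * d)"
    using \<open>16 \<le> d\<close> by (simp add: power_mult power2_eq_square)
  also have "\<dots> = exp (2 * real d * ln (real d))"
    by (simp flip: exp_of_nat_mult)
  finally show ?thesis .
qed

lemma degree_lcm_poly_le_mult_ln:
  assumes "N * N \<le> 4 * d" "81 \<le> d"
  shows "real (degree (lcm_poly N)) \<le> real d * ln (real d)"
proof -
  have "real (degree (lcm_poly N)) \<le> 4 * real d"
    using degree_lcm_poly_le[of N] assms(1) by linarith
  also have "\<dots> \<le> real d * ln (real d)"
    using assms(2) by (rule four_mult_le_mult_ln)
  finally show ?thesis .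
qed

lemma poly_height_lcm_poly_le_exp:
  assumes "N * N \<le> 4 * d" "16 \<le> d"
  shows "real_of_rat (poly_height (map_poly of_int (lcm_poly N))) \<le> exp (2 * real d * ln (real d))"
proof -
  have "real_of_rat (poly_height (map_poly of_int (lcm_poly N))) \<le> 2 ^ (N * N)"
    using of_rat_less_eq[where 'a=real, THEN iffD2, OF poly_height_lcm_poly_le[of N]]
    by (simp add: of_rat_power)
  also have "\<dots> \<le> 2 ^ (4 * d)"
    using assms(1) by (intro power_increasing) simp_all
  also have "\<dots> \<le> exp (2 * real d * ln (real d))"
    using assms(2) by (rule two_power_le_exp_mult_ln)
  finally show ?thesis .
qed

lemma exp_sqrt_lt_prod_max_prime_powers:
  assumes "100 \<le> d"
  shows "exp (sqrt (real d)) < real (\<Prod>(max_prime_powers (2 * nat \<lfloor>sqrt (real d)\<rfloor>)))"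
proof -
  define s where "s = nat \<lfloor>sqrt (real d)\<rfloor>"
  have "1 \<le> sqrt (real d)"
    using assms by (intro real_le_rsqrt) simp
  then have "1 \<le> s"
    unfolding s_def by (simp add: le_nat_iff le_floor_iff)
  then have "4 ^ (s - 1) \<le> \<Prod>(max_prime_powers (2 * s))"
    by (intro four_power_le_prod_max_prime_powers) simp
  then have "(4::real) ^ (s - 1) \<le> real (\<Prod>(max_prime_powers (2 * s)))"
    using of_nat_le_iff[where 'a=real] by (metis of_nat_numeral of_nat_power)
  with exp_sqrt_lt_four_power[OF assms] show ?thesis
    unfolding s_def by linarith
qed

lemma double_floor_sqrt_square_le:
  "(2 * nat \<lfloor>sqrt (real d)\<rfloor>) * (2 * nat \<lfloor>sqrt (real d)\<rfloor>) \<le> 4 * d"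
proof -
  define s where "s = nat \<lfloor>sqrt (real d)\<rfloor>"
  have "real s ^ 2 \<le> sqrt (real d) ^ 2"
    unfolding s_def by (intro power_mono) simp_all
  then have "real (s * s) \<le> real d"
    by (simp add: power2_eq_square)
  then have "s * s \<le> d"
    by (simp only: of_nat_le_iff)
  then show ?thesis
    unfolding s_def[symmetric] by simp
qed

theorem theorem3p7:
  fixes d :: nat
  assumes "d \<ge> 841"
  shows "\<exists>f :: int poly. f \<noteq> 0
           \<and> real (degree f) \<le> real d * ln (real d)
           \<and> real_of_rat (poly_height (map_poly of_int f)) \<le> exp (2 * real d * ln (real d))
           \<and> (\<exists>m a. binomial_multiple (map_poly of_int f) m a
                  \<and> (\<forall>m' a'. binomial_multiple (map_poly of_int f) m' a' \<longrightarrow> m \<le> m')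
                  \<and> real m > exp (sqrt (real d))
                  \<and> real_of_int (rat_height a) > 2 powr exp (sqrt (real d)))"
proof -
  define N where "N = 2 * nat \<lfloor>sqrt (real d)\<rfloor>"
  define M where "M = \<Prod>(max_prime_powers N)"
  have NN: "N * N \<le> 4 * d"
    unfolding N_def by (rule double_floor_sqrt_square_le)
  have "2 \<le> sqrt (real d)"
    using assms by (intro real_le_rsqrt) simp
  then have "4 \<le> N"
    unfolding N_def by (simp add: le_nat_iff le_floor_iff)
  have M_big: "exp (sqrt (real d)) < real M"
    unfolding M_def N_def using assms by (intro exp_sqrt_lt_prod_max_prime_powers) simp
  show ?thesis
  proof (intro exI conjI allI impI)
    show "lcm_poly N \<noteq> 0" by (rule lcm_poly_nonzero)
    show "real (degree (lcm_poly N)) \<le> real d * ln (real d)"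
      using NN assms by (intro degree_lcm_poly_le_mult_ln) simp_all
    show "real_of_rat (poly_height (map_poly of_int (lcm_poly N))) \<le> exp (2 * real d * ln (real d))"
      using NN assms by (intro poly_height_lcm_poly_le_exp) simp_all
    show "binomial_multiple (map_poly of_int (lcm_poly N)) M (2 ^ M)"
      unfolding M_def by (rule binomial_multiple_lcm_poly)
    show "M \<le> m'" if "binomial_multiple (map_poly of_int (lcm_poly N)) m' a'" for m' a'
      unfolding M_def using \<open>4 \<le> N\<close> that by (rule prod_max_prime_powers_le_if_binomial_multiple)
    show "exp (sqrt (real d)) < real M" by (rule M_big)
    have "2 powr exp (sqrt (real d)) < 2 powr real M"
      using M_big by simp
    also have "\<dots> = real_of_int (rat_height (2 ^ M))"
      using rat_height_of_int[of "2 ^ M"] by (simp add: powr_realpow)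
    finally show "2 powr exp (sqrt (real d)) < real_of_int (rat_height (2 ^ M))" .
  qed
qed

end
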